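(* Let $\lambda\neq 0$ and $F(t)=F(t;\lambda)=\frac{1}{(1+t)^{\lambda}+1}$. Then for every positive integer $N$, $$\left(\frac{d}{dt}\right)^N F(t)=\frac{(-1)^N\lambda}{(1+t)^N}\sum_{i=1}^{N+1}a_{i-1}(N;\lambda)F(t)^i,$$ where $a_0(N;\lambda)=(N+\lambda-1)_{N-1}$, $a_N(N;\lambda)=(-1)^N\lambda^{N-1}N!$, and for $1\le j\le N-1$, $$a_j(N;\lambda)=(-1)^j j!\,\lambda^j\sum_{i_j=0}^{N-j}\sum_{i_{j-1}=0}^{N-j-i_j}\cdots\sum_{i_1=0}^{N-j-i_j-\cdots-i_2}\ \prod_{\ell=1}^{j}\Bigl(N+(\ell+1)\lambda-(i_j+\cdots+i_{\ell+1})-(j-\ell)-1\Bigr)_{i_\ell}\cdot\Bigl(N+\lambda-S-j-1\Bigr)_{N-S-j-1},$$ with $S=i_1+\cdots+i_j$ (the empty sum $i_j+\cdots+i_{j+1}$ being $0$). Explicitly, the product is $(N+(j+1)\lambda-1)_{i_j}(N+j\lambda-i_j-2)_{i_{j-1}}\cdots(N+2\lambda-i_j-\cdots-i_2-j)_{i_1}$.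
   Context: $(x)_n=x(x-1)\cdots(x-n+1)$ for $n\ge1$, $(x)_0=1$, and, for the boundary terms where the index equals $-1$, $(x)_{-1}=\frac{1}{x+1}$ (so that e.g. $(\lambda-1)_{-1}=1/\lambda$). *)

theory Defs
  imports "HOL-Analysis.Analysis"
begin

text \<open>Falling factorial with integer index: (x)_n = x(x-1)...(x-n+1) for n >= 1,
  (x)_0 = 1, and (x)_{-1} = 1/(x+1).  Other negative indices do not occur.\<close>
definition ffact :: "real \<Rightarrow> int \<Rightarrow> real" where
  "ffact x n = (if n \<ge> 0 then (\<Prod>k<nat n. x - real k)
                else if n = -1 then 1 / (x + 1) else undefined)"

definition F :: "real \<Rightarrow> real \<Rightarrow> real" where
  "F lam t = 1 / ((1 + t) powr lam + 1)"

text \<open>Index tuples (i_1,...,i_j) of the nested sum, as functions supported on {1..j};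
  the nested bounds are exactly i_1 + ... + i_j <= N - j.\<close>
definition idx :: "nat \<Rightarrow> nat \<Rightarrow> (nat \<Rightarrow> nat) set" where
  "idx N j = {i. (\<forall>l. l \<notin> {1..j} \<longrightarrow> i l = 0) \<and> (\<Sum>l=1..j. i l) \<le> N - j}"

definition coef :: "nat \<Rightarrow> nat \<Rightarrow> real \<Rightarrow> real" where
  "coef j N lam =
    (if j = 0 then ffact (real N + lam - 1) (int N - 1)
     else if j = N then (-1) ^ N * lam ^ (N - 1) * fact N
     else (-1) ^ j * fact j * lam ^ j *
       (\<Sum>i\<in>idx N j.
          (\<Prod>l=1..j. ffact (real N + real (l + 1) * lam - real (\<Sum>m=l+1..j. i m)
                               - real (j - l) - 1) (int (i l)))
          * ffact (real N + lam - real (\<Sum>l=1..j. i l) - real j - 1)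
                  (int N - int (\<Sum>l=1..j. i l) - int j - 1)))"

end

theory Submission
  imports Defs
begin

text \<open>
  Since F = 1/((1+t)^\<lambda> + 1) satisfies (1+t) F' = -\<lambda> (F - F^2), differentiating
  (-1)^N \<lambda> (1+t)^{-N} \<Sum>_j c_j(N) F^{j+1} once more gives an expression of the same shape, with
  c_j(N+1) = (N + (j+1)\<lambda>) c_j(N) - j\<lambda> c_{j-1}(N).  It remains to see that the closed form
  a_j(N) = (-1)^j j! \<lambda>^j A_j(N) satisfies this recursion, where A_j(N) is the nested sum.  For this
  one splits off the outermost index i_{j+1} = k, which gives
  A_{j+1}(N) = \<Sum>_k (N + (j+2)\<lambda> - 1)_k A_j(N-1-k); comparing this for N and N+1 with
  (x)_{k+1} = x (x-1)_k yields A_{j+1}(N+1) = (N + (j+2)\<lambda>) A_{j+1}(N) + A_j(N).  The boundary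
  values are A_0(N) = (N+\<lambda>-1)_{N-1} and A_N(N) = 1/\<lambda>.
\<close>

lemma ffact_0 [simp]: "ffact x 0 = 1"
  by (simp add: ffact_def)

lemma ffact_Suc: "ffact x (int (Suc k)) = x * ffact (x - 1) (int k)"
proof -
  have "(\<Prod>i<Suc k. x - real i) = x * (\<Prod>i<k. x - 1 - real i)"
    by (subst prod.lessThan_Suc_shift) (simp add: algebra_simps)
  then show ?thesis
    unfolding ffact_def by (simp only: nat_int of_nat_0_le_iff if_True)
qed

lemma finite_idx: "finite (idx N j)"
proof (rule finite_subset)
  show "idx N j \<subseteq>
          {i. \<forall>l. (l \<in> {1..j} \<longrightarrow> i l \<in> {0..N}) \<and> (l \<notin> {1..j} \<longrightarrow> i l = 0)}"
  proof safe
    fix i l assume i: "i \<in> idx N j" and l: "l \<in> {1..j}"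
    have "i l \<le> (\<Sum>l=1..j. i l)" using l by (intro member_le_sum) auto
    with i show "i l \<in> {0..N}" unfolding idx_def by auto
  qed (auto simp: idx_def)
qed (rule finite_set_of_finite_funs; simp)

lemma idx_0: "idx N 0 = {\<lambda>_. 0}"
  unfolding idx_def by auto

lemma bij_betw_idx_Suc:
  assumes "Suc j \<le> N"
  shows "bij_betw (\<lambda>i. (i (Suc j), i(Suc j := 0))) (idx N (Suc j))
           (SIGMA k:{..N - Suc j}. idx (N - 1 - k) j)"
proof (rule bij_betw_byWitness[where f' = "\<lambda>(k, i). i(Suc j := k)"])
  have sum_upd: "(\<Sum>l=1..j. (i(Suc j := k)) l) = (\<Sum>l=1..j. i l)" for i :: "nat \<Rightarrow> nat" and k
    by (rule sum.cong) auto
  show "(\<lambda>i. (i (Suc j), i(Suc j := 0))) ` idx N (Suc j) \<subseteq>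
          (SIGMA k:{..N - Suc j}. idx (N - 1 - k) j)"
    using assms by (auto simp: idx_def sum.cl_ivl_Suc sum_upd)
  show "(\<lambda>(k, i). i(Suc j := k)) ` (SIGMA k:{..N - Suc j}. idx (N - 1 - k) j) \<subseteq>
          idx N (Suc j)"
    using assms by (auto simp: idx_def sum.cl_ivl_Suc sum_upd)
qed (auto simp: idx_def)

definition nested_term :: "nat \<Rightarrow> nat \<Rightarrow> real \<Rightarrow> (nat \<Rightarrow> nat) \<Rightarrow> real" where
  "nested_term j N lam i =
     (\<Prod>l=1..j. ffact (real N + real (l + 1) * lam - real (\<Sum>m=l+1..j. i m)
                         - real (j - l) - 1) (int (i l)))
     * ffact (real N + lam - real (\<Sum>l=1..j. i l) - real j - 1)
             (int N - int (\<Sum>l=1..j. i l) - int j - 1)"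

definition nested_sum :: "nat \<Rightarrow> nat \<Rightarrow> real \<Rightarrow> real" where
  "nested_sum j N lam = (\<Sum>i\<in>idx N j. nested_term j N lam i)"

lemma nested_term_fun_upd:
  assumes "k < N"
  shows "nested_term (Suc j) N lam (i(Suc j := k)) =
           ffact (real N + real (j + 2) * lam - 1) (int k) * nested_term j (N - 1 - k) lam i"
proof -
  have N: "real (N - Suc k) = real N - 1 - real k" "int (N - Suc k) = int N - 1 - int k"
    using assms by (simp_all add: of_nat_diff)
  have tail_sum: "(\<Sum>m=l+1..Suc j. (i(Suc j := k)) m) = k + (\<Sum>m=l+1..j. i m)" if "l \<le> j" for l
    using that by (simp add: sum.cl_ivl_Suc)
  have "(\<Prod>l=1..j. ffact (real N + real (l + 1) * lam - real (\<Sum>m=l+1..Suc j. (i(Suc j := k)) m)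
                            - real (Suc j - l) - 1) (int ((i(Suc j := k)) l)))
      = (\<Prod>l=1..j. ffact (real (N - 1 - k) + real (l + 1) * lam - real (\<Sum>m=l+1..j. i m)
                            - real (j - l) - 1) (int (i l)))"
    by (rule prod.cong) (auto simp: tail_sum N Suc_diff_le algebra_simps)
  then show ?thesis
    unfolding nested_term_def
    by (simp add: prod.cl_ivl_Suc sum.cl_ivl_Suc tail_sum N algebra_simps)
qed

lemma nested_sum_Suc:
  assumes "Suc j \<le> N"
  shows "nested_sum (Suc j) N lam =
           (\<Sum>k\<le>N - Suc j. ffact (real N + real (j + 2) * lam - 1) (int k)
                             * nested_sum j (N - 1 - k) lam)"
proof -
  have "nested_sum (Suc j) N lam =
          (\<Sum>(k, i)\<in>(SIGMA k:{..N - Suc j}. idx (N - 1 - k) j).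
             nested_term (Suc j) N lam (i(Suc j := k)))"
    unfolding nested_sum_def
    by (subst sum.reindex_bij_betw[OF bij_betw_idx_Suc[OF assms], symmetric]) simp
  also have "\<dots> = (\<Sum>k\<le>N - Suc j. \<Sum>i\<in>idx (N - 1 - k) j.
                     ffact (real N + real (j + 2) * lam - 1) (int k) * nested_term j (N - 1 - k) lam i)"
    using assms
    by (subst sum.Sigma[symmetric]) (auto simp: finite_idx nested_term_fun_upd intro!: sum.cong)
  finally show ?thesis
    by (simp add: nested_sum_def sum_distrib_left)
qed

lemma nested_sum_0: "nested_sum 0 N lam = ffact (real N + lam - 1) (int N - 1)"
  by (simp add: nested_sum_def nested_term_def idx_0)

lemma nested_sum_diag:
  assumes "lam \<noteq> 0"
  shows "nested_sum j j lam = 1 / lam"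
proof (induction j)
  case 0
  show ?case by (simp add: nested_sum_0 ffact_def)
next
  case (Suc j)
  have "nested_sum (Suc j) (Suc j) lam = nested_sum j j lam"
    by (simp add: nested_sum_Suc ffact_def)
  with Suc show ?case by simp
qed

lemma nested_sum_0_Suc:
  assumes "lam \<noteq> 0"
  shows "nested_sum 0 (Suc N) lam = (real N + lam) * nested_sum 0 N lam"
proof (cases N)
  case 0
  with assms show ?thesis by (simp add: nested_sum_0 ffact_def)
next
  case (Suc n)
  then show ?thesis
    using ffact_Suc[of "real N + lam" n] by (simp add: nested_sum_0 algebra_simps)
qed

lemma nested_sum_Suc_Suc:
  assumes "Suc j \<le> N"
  shows "nested_sum (Suc j) (Suc N) lam =
           (real N + real (j + 2) * lam) * nested_sum (Suc j) N lam + nested_sum j N lam"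
proof -
  let ?c = "real N + real (j + 2) * lam"
  have "nested_sum (Suc j) (Suc N) lam =
          (\<Sum>k\<le>Suc (N - Suc j). ffact ?c (int k) * nested_sum j (N - k) lam)"
    using assms by (simp add: nested_sum_Suc Suc_diff_Suc del: sum.atMost_Suc)
  also have "\<dots> = nested_sum j N lam +
                   (\<Sum>k\<le>N - Suc j. ?c * (ffact (?c - 1) (int k) * nested_sum j (N - 1 - k) lam))"
    by (subst sum.atMost_Suc_shift) (simp add: ffact_Suc mult.assoc del: of_nat_Suc)
  also have "\<dots> = ?c * nested_sum (Suc j) N lam + nested_sum j N lam"
    using assms by (simp add: nested_sum_Suc sum_distrib_left)
  finally show ?thesis .
qed

text \<open>The coefficients a_j(N;\<lambda>) of the theorem in a uniform closed form, extended by 0 for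
  j > N so that their recursion in N needs no boundary cases.\<close>
definition deriv_coeff :: "nat \<Rightarrow> nat \<Rightarrow> real \<Rightarrow> real" where
  "deriv_coeff j N lam = (if j \<le> N then (-1) ^ j * fact j * lam ^ j * nested_sum j N lam else 0)"

lemma deriv_coeff_eq_0: "N < j \<Longrightarrow> deriv_coeff j N lam = 0"
  by (simp add: deriv_coeff_def)

lemma coef_eq_deriv_coeff:
  assumes "lam \<noteq> 0" "j \<le> N"
  shows "coef j N lam = deriv_coeff j N lam"
proof -
  consider "j = 0" | "0 < j" "j = N" | "0 < j" "j < N"
    using assms(2) by linarith
  then show ?thesis
  proof cases
    case 1
    then show ?thesis by (simp add: coef_def deriv_coeff_def nested_sum_0)
  next
    case 2
    then have "lam ^ N = lam * lam ^ (N - 1)"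
      by (simp add: power_eq_if)
    with 2 assms(1) show ?thesis
      by (simp add: coef_def deriv_coeff_def nested_sum_diag)
  next
    case 3
    then show ?thesis by (simp add: coef_def deriv_coeff_def nested_sum_def nested_term_def)
  qed
qed

lemma deriv_coeff_Suc:
  assumes "lam \<noteq> 0"
  shows "deriv_coeff j (Suc N) lam =
           (real N + lam * real (Suc j)) * deriv_coeff j N lam - lam * real j * deriv_coeff (j - 1) N lam"
proof -
  consider "j = 0" | j' where "j = Suc j'" "j' < N" | "j = Suc N" | "j > Suc N"
    by (metis not0_implies_Suc not_less_eq not_less_iff_gr_or_eq)
  then show ?thesis
  proof cases
    case 1
    with assms show ?thesis
      by (simp add: deriv_coeff_def nested_sum_0_Suc)
  next
    case 2
    then show ?thesis
      by (simp add: deriv_coeff_def nested_sum_Suc_Suc algebra_simps)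
  next
    case 3
    with assms show ?thesis
      by (simp add: deriv_coeff_def nested_sum_diag field_simps)
  qed (simp add: deriv_coeff_def)
qed

definition deriv_poly :: "nat \<Rightarrow> real \<Rightarrow> real \<Rightarrow> real" where
  "deriv_poly N lam x = (\<Sum>j\<le>N. deriv_coeff j N lam * x ^ Suc j)"

lemma deriv_poly_has_real_derivative:
  "(deriv_poly N lam has_real_derivative
      (\<Sum>j\<le>N. deriv_coeff j N lam * (real (Suc j) * x ^ j))) (at x)"
  unfolding deriv_poly_def
  by (intro DERIV_sum DERIV_cmult) (use DERIV_pow[of "Suc _"] in simp)

lemma deriv_poly_Suc:
  assumes "lam \<noteq> 0"
  shows "deriv_poly (Suc N) lam x =
           real N * deriv_poly N lam x
           + lam * (x - x ^ 2) * (\<Sum>j\<le>N. deriv_coeff j N lam * (real (Suc j) * x ^ j))"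
proof -
  have lower: "(\<Sum>j\<le>Suc N. (real N + lam * real (Suc j)) * deriv_coeff j N lam * x ^ Suc j)
             = (\<Sum>j\<le>N. (real N + lam * real (Suc j)) * deriv_coeff j N lam * x ^ Suc j)"
    by (simp add: deriv_coeff_eq_0)
  have shifted: "(\<Sum>j\<le>Suc N. lam * real j * deriv_coeff (j - 1) N lam * x ^ Suc j)
               = (\<Sum>j\<le>N. lam * real (Suc j) * deriv_coeff j N lam * x ^ Suc (Suc j))"
    by (subst sum.atMost_Suc_shift) simp
  have "deriv_poly (Suc N) lam x =
          (\<Sum>j\<le>Suc N. (real N + lam * real (Suc j)) * deriv_coeff j N lam * x ^ Suc j)
          - (\<Sum>j\<le>Suc N. lam * real j * deriv_coeff (j - 1) N lam * x ^ Suc j)"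
    unfolding deriv_poly_def deriv_coeff_Suc[OF assms] sum_subtractf[symmetric]
    by (simp add: algebra_simps)
  also have "\<dots> = real N * deriv_poly N lam x
                   + lam * (x - x ^ 2) * (\<Sum>j\<le>N. deriv_coeff j N lam * (real (Suc j) * x ^ j))"
    unfolding lower shifted deriv_poly_def sum_distrib_left sum_subtractf[symmetric]
      sum.distrib[symmetric]
    by (rule sum.cong) (simp_all add: power2_eq_square algebra_simps)
  finally show ?thesis .
qed

definition deriv_formula :: "nat \<Rightarrow> real \<Rightarrow> real \<Rightarrow> real" where
  "deriv_formula N lam t = (-1) ^ N * lam / (1 + t) ^ N * deriv_poly N lam (F lam t)"

lemma deriv_formula_0:
  assumes "lam \<noteq> 0"
  shows "deriv_formula 0 lam t = F lam t"
  using assms by (simp add: deriv_formula_def deriv_poly_def deriv_coeff_def nested_sum_0 ffact_def)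

lemma F_has_real_derivative:
  assumes "t > -1"
  shows "(F lam has_real_derivative -lam / (1 + t) * (F lam t - F lam t ^ 2)) (at t)"
proof -
  define w where "w = (1 + t) powr lam + 1"
  have pos: "1 + t > 0" "w > 0"
    using assms by (auto simp: w_def intro: add_nonneg_pos)
  have "(F lam has_real_derivative - (lam * (1 + t) powr (lam - 1)) / w ^ 2) (at t)"
    unfolding F_def using pos
    by (auto intro!: derivative_eq_intros simp: w_def power2_eq_square)
  moreover have "F lam t - F lam t ^ 2 = (w - 1) / w ^ 2"
    using pos(2) by (simp add: F_def flip: w_def) (simp add: field_simps power2_eq_square)
  moreover have "(1 + t) powr (lam - 1) = (w - 1) / (1 + t)"
    using pos(1) by (simp add: w_def powr_diff)
  ultimately show ?thesis
    by (simp only:) (simp add: field_simps)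
qed

lemma has_real_derivative_inverse_power:
  fixes x :: real
  assumes "x \<noteq> 0"
  shows "((\<lambda>y. 1 / y ^ N) has_real_derivative - real N / x ^ Suc N) (at x)"
proof -
  have as_power: "(\<lambda>y::real. 1 / y ^ N) = (\<lambda>y. inverse y ^ N)"
    by (simp add: divide_inverse power_inverse)
  have val: "real N * (- (inverse x ^ Suc (Suc 0)) * inverse x ^ (N - Suc 0)) = - real N / x ^ Suc N"
    using assms by (cases N) (simp_all add: field_simps)
  show ?thesis
    unfolding as_power using DERIV_power[OF DERIV_inverse[OF assms], of N] unfolding val .
qed

lemma deriv_formula_has_real_derivative:
  assumes "lam \<noteq> 0" "t > -1"
  shows "(deriv_formula N lam has_real_derivative deriv_formula (Suc N) lam t) (at t)"
proof -
  define x where "x = F lam t"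
  define dP where "dP = (\<Sum>j\<le>N. deriv_coeff j N lam * (real (Suc j) * x ^ j))"
  have pos: "1 + t \<noteq> 0" using assms(2) by simp
  have chain: "((\<lambda>s. deriv_poly N lam (F lam s)) has_real_derivative
                  dP * (-lam / (1 + t) * (x - x ^ 2))) (at t)"
    unfolding dP_def x_def
    by (rule DERIV_chain2[OF deriv_poly_has_real_derivative F_has_real_derivative[OF assms(2)]])
  have power: "((\<lambda>s. 1 / (1 + s) ^ N) has_real_derivative - real N / (1 + t) ^ Suc N) (at t)"
    using DERIV_chain2[where f = "\<lambda>y. 1 / y ^ N" and g = "\<lambda>s. 1 + s",
        OF has_real_derivative_inverse_power[OF pos] DERIV_add[OF DERIV_const DERIV_ident]]
    by simp
  have "deriv_formula N lam =
          (\<lambda>s. (-1) ^ N * lam * (1 / (1 + s) ^ N * deriv_poly N lam (F lam s)))"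
    by (simp add: fun_eq_iff deriv_formula_def)
  then have "(deriv_formula N lam has_real_derivative
               (-1) ^ N * lam * (- real N / (1 + t) ^ Suc N * deriv_poly N lam (F lam t)
                 + dP * (-lam / (1 + t) * (x - x ^ 2)) * (1 / (1 + t) ^ N))) (at t)"
    using DERIV_cmult[OF DERIV_mult[OF power chain]] by (simp only:)
  moreover have "(-1) ^ N * lam * (- real N / (1 + t) ^ Suc N * deriv_poly N lam (F lam t)
                    + dP * (-lam / (1 + t) * (x - x ^ 2)) * (1 / (1 + t) ^ N))
               = deriv_formula (Suc N) lam t"
    unfolding deriv_formula_def x_def[symmetric]
      deriv_poly_Suc[OF assms(1), where N = N and x = x, folded dP_def]
    using pos by (simp add: field_simps) (simp add: add_divide_distrib diff_divide_distrib)
  ultimately show ?thesis by simp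
qed

lemma higher_deriv_eqI:
  fixes f :: "real \<Rightarrow> real" and g :: "nat \<Rightarrow> real \<Rightarrow> real"
  assumes "open S"
    and "\<And>x. x \<in> S \<Longrightarrow> f x = g 0 x"
    and "\<And>n x. x \<in> S \<Longrightarrow> (g n has_real_derivative g (Suc n) x) (at x)"
    and "x \<in> S"
  shows "(deriv ^^ n) f x = g n x"
  using assms(4)
proof (induction n arbitrary: x)
  case 0
  then show ?case using assms(2) by simp
next
  case (Suc n)
  have "((deriv ^^ n) f has_real_derivative g (Suc n) x) (at x)"
    by (rule has_field_derivative_transform_within_open[OF assms(3) assms(1)])
       (use Suc in auto)
  then show ?case by (simp add: DERIV_imp_deriv)
qed

theorem theorem2:
  fixes lam t :: real and N :: nat
  assumes "lam \<noteq> 0" and "N \<ge> 1" and "t > -1"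
  shows "(deriv ^^ N) (F lam) t =
           (-1) ^ N * lam / (1 + t) ^ N * (\<Sum>i=1..N+1. coef (i - 1) N lam * F lam t ^ i)"
proof -
  have "(\<Sum>i=1..N+1. coef (i - 1) N lam * F lam t ^ i) =
          (\<Sum>j=0..N. coef j N lam * F lam t ^ Suc j)"
    using sum.shift_bounds_cl_Suc_ivl[of "\<lambda>i. coef (i - 1) N lam * F lam t ^ i" 0 N] by simp
  also have "\<dots> = deriv_poly N lam (F lam t)"
    unfolding deriv_poly_def atLeast0AtMost
    by (intro sum.cong) (simp_all add: coef_eq_deriv_coeff assms(1))
  finally have "(\<Sum>i=1..N+1. coef (i - 1) N lam * F lam t ^ i) = deriv_poly N lam (F lam t)" .
  moreover have "(deriv ^^ N) (F lam) t = deriv_formula N lam t"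
    using assms(1,3)
    by (intro higher_deriv_eqI[of "{-1<..}"])
       (auto simp: deriv_formula_0 deriv_formula_has_real_derivative)
  ultimately show ?thesis
    by (simp add: deriv_formula_def)
qed

end
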